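(* Consider the Markov process described in the context with $K=1$, satisfying Assumption (A) and the ergodicity condition (E). Then for every $x=(x_1,\dots,x_c)\in\{-1,1\}^c$ the equation $(\mathrm{E}_x)$ has at least one root $\beta_0\in(0,1)$.
   Context: Fix integers $c\ge 1$ and $K\ge1$ (in the claim $K=1$). Consider an irreducible continuous-time Markov process on $V\cup W$, where $V$ is finite and $W=\{\mathbf n=(n_0,\dots,n_c): n_0\in\{0,1,\dots\},\ n_i\in\{0,1\}\}$. For each $i\in\{1,\dots,c\}$ and integer $k\le K$ there are nonnegative rates $a_{k,i},b_{k,i},c_{k,i},d_{k,i}$. From $\mathbf n\in W$, for each $i$ and $k\in\{-n_0,\dots,K\}$, the process jumps (changing only coordinates $0$ and $i$) from $(n_0,n_i)=(n_0,0)$ to $(n_0+k,1)$ at rate $a_{k,i}$ and to $(n_0+k,0)$ at rate $b_{k,i}$, and from $(n_0,1)$ to $(n_0+k,1)$ at rate $c_{k,i}$ and to $(n_0+k,0)$ at rate $d_{k,i}$; from $\mathbf n$ it jumps into $V$ with total rate $\sum_i\sum_{k\le -n_0-1}((1-n_i)(a_{k,i}+b_{k,i})+n_i(c_{k,i}+d_{k,i}))$; no other transitions leave $W$, and from $V$ no transitions go to states with $n_0\ge K$. Let $A_i(z)=\sum_{k=-\infty}^K a_{k,i}z^{K-k}$ and similarly $B_i,C_i,D_i$ with $b,c,d$. Assumption (A): for each $i$: (i) $A_i(1),B_i(1),C_i(1),D_i(1)<\infty$; (ii) $A_i(1),D_i(1)>0$; (iii) $A_i'(1),B_i'(1),C_i'(1),D_i'(1)<\infty$;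 (iv) $a_{K,i}=0$ or $d_{K,i}=0$; (v) $b_{K,i}=c_{K,i}\ne0$. Ergodicity condition (E): $0<\sum_{i=1}^c\frac{1}{A_i(1)+D_i(1)}\bigl(D_i(1)(A_i'(1)-KA_i(1)+B_i'(1)-KB_i(1))+A_i(1)(C_i'(1)-KC_i(1)+D_i'(1)-KD_i(1))\bigr)$. Let $F_i(z)=z^K(A_i(1)+B_i(1)-C_i(1)-D_i(1))-B_i(z)+C_i(z)$. For real $\beta_0\in[0,1]$ let $R_i(\beta_0)=\sqrt{F_i(\beta_0)^2+4A_i(\beta_0)D_i(\beta_0)}$ (nonnegative square root). For $x\in\{-1,1\}^c$, equation $(\mathrm E_x)$ in the unknown $\beta_0$ is \[0=\sum_{i=1}^c\Bigl(x_iR_i(\beta_0)+B_i(\beta_0)+C_i(\beta_0)-\beta_0^K\bigl(A_i(1)+B_i(1)+C_i(1)+D_i(1)\bigr)\Bigr).\] *)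

theory Defs
  imports "HOL-Analysis.Analysis"
begin

text \<open>Rates are given as functions r k i (k :: int, the jump size, with k \<le> K = 1;
  i the server index in {1..c}). With K = 1 the generating function
  R_i(z) = sum_{k \<le> 1} r_{k,i} z^(1-k) is written as a power series in n = 1 - k.\<close>

definition genf :: "(int \<Rightarrow> nat \<Rightarrow> real) \<Rightarrow> nat \<Rightarrow> real \<Rightarrow> real" where
  "genf r i z = (\<Sum>n. r (1 - int n) i * z ^ n)"

definition genf_deriv1 :: "(int \<Rightarrow> nat \<Rightarrow> real) \<Rightarrow> nat \<Rightarrow> real" where
  "genf_deriv1 r i = (\<Sum>n. real n * r (1 - int n) i)"

end

theory Submission
  imports Defs
begin

text \<open>Let \<open>f(\<beta>)\<close> be the right-hand side of \<open>(E\<^sub>x)\<close>. Since \<open>a\<^sub>1\<^sub>,\<^sub>i d\<^sub>1\<^sub>,\<^sub>i = 0\<close> and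
  \<open>b\<^sub>1\<^sub>,\<^sub>i = c\<^sub>1\<^sub>,\<^sub>i \<noteq> 0\<close>, we get \<open>f(0) = 2 \<Sum>\<^sub>i b\<^sub>1\<^sub>,\<^sub>i > 0\<close>. Every generating function
  factors as \<open>P(\<beta>) = P(1) - (1 - \<beta>) Q(\<beta>)\<close> with \<open>Q\<close> continuous on \<open>[0,1]\<close> and
  \<open>Q(1) = P'(1)\<close>; feeding this into the square root gives
  \<open>f(\<beta>) = \<Sum>\<^sub>i (x\<^sub>i - 1)(A\<^sub>i(1) + D\<^sub>i(1)) + (1 - \<beta>) G(\<beta>)\<close> with \<open>G\<close> continuous. If some
  \<open>x\<^sub>i = -1\<close> then \<open>f(1) < 0\<close>; if all \<open>x\<^sub>i = 1\<close> then \<open>f(1) = 0\<close> but \<open>G(1)\<close> is \<open>-2\<close> times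
  the drift in (E), so \<open>f < 0\<close> just left of \<open>1\<close>. Either way the intermediate value
  theorem yields a root in \<open>(0,1)\<close>.\<close>

definition slope_series :: "(nat \<Rightarrow> real) \<Rightarrow> real \<Rightarrow> real" where
  "slope_series p y = (\<Sum>n. p n * (\<Sum>j<n. y ^ j))"

lemma geometric_sum_bounds:
  fixes y :: real
  assumes "0 \<le> y" "y \<le> 1"
  shows "0 \<le> (\<Sum>j<n. y ^ j)" "(\<Sum>j<n. y ^ j) \<le> real n"
proof -
  show "0 \<le> (\<Sum>j<n. y ^ j)" using assms by (simp add: sum_nonneg)
  have "(\<Sum>j<n. y ^ j) \<le> (\<Sum>j<n. 1)" by (rule sum_mono) (simp add: assms power_le_one)
  then show "(\<Sum>j<n. y ^ j) \<le> real n" by simp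
qed

lemma slope_series_term_bound:
  fixes y :: real
  assumes "0 \<le> p n" "0 \<le> y" "y \<le> 1"
  shows "norm (p n * (\<Sum>j<n. y ^ j)) \<le> real n * p n"
  using mult_left_mono[OF geometric_sum_bounds(2)[OF assms(2,3)] assms(1)]
    geometric_sum_bounds(1)[OF assms(2,3)] assms(1)
  by (simp add: abs_mult mult.commute)

lemma continuous_on_slope_series:
  assumes "\<And>n. 0 \<le> p n" "summable (\<lambda>n. real n * p n)"
  shows "continuous_on {0..1} (slope_series p)"
proof -
  have "uniform_limit {0..1} (\<lambda>N y. \<Sum>n<N. p n * (\<Sum>j<n. y ^ j)) (slope_series p) sequentially"
    unfolding slope_series_def
    using assms by (intro Weierstrass_m_test[OF _ assms(2)] slope_series_term_bound) auto
  then show ?thesis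
    by (rule uniform_limit_theorem[rotated]) (auto intro!: always_eventually continuous_intros)
qed

lemma summable_powser_nonneg_unit_interval:
  fixes y :: real
  assumes "\<And>n. 0 \<le> p n" "summable p" "0 \<le> y" "y \<le> 1"
  shows "summable (\<lambda>n. p n * y ^ n)"
  by (rule summable_comparison_test'[OF assms(2)])
    (use assms in \<open>simp add: abs_mult mult_left_le power_le_one\<close>)

lemma powser_eq_sum_minus_slope_series:
  fixes y :: real
  assumes nonneg: "\<And>n. 0 \<le> p n" and "summable p" and "summable (\<lambda>n. real n * p n)"
    and y: "0 \<le> y" "y \<le> 1"
  shows "(\<Sum>n. p n * y ^ n) = (\<Sum>n. p n) - (1 - y) * slope_series p y"
proof -
  have "summable (\<lambda>n. p n * y ^ n)"
    using nonneg \<open>summable p\<close> y by (rule summable_powser_nonneg_unit_interval)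
  then have "(\<Sum>n. p n) - (\<Sum>n. p n * y ^ n) = (\<Sum>n. p n * (1 - y ^ n))"
    using suminf_diff[OF \<open>summable p\<close>] by (simp add: right_diff_distrib)
  also have "\<dots> = (\<Sum>n. (1 - y) * (p n * (\<Sum>j<n. y ^ j)))"
    unfolding one_diff_power_eq by (simp add: mult.left_commute)
  also have "\<dots> = (1 - y) * slope_series p y"
    unfolding slope_series_def
    using assms by (intro suminf_mult summable_comparison_test'[OF assms(3)]
        slope_series_term_bound)
  finally show ?thesis by simp
qed

definition regular_rate :: "(int \<Rightarrow> nat \<Rightarrow> real) \<Rightarrow> nat \<Rightarrow> bool" where
  "regular_rate r i \<longleftrightarrow> (\<forall>k\<le>1. 0 \<le> r k i) \<and>
     summable (\<lambda>n. r (1 - int n) i) \<and> summable (\<lambda>n. real n * r (1 - int n) i)"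

lemma regular_rateD:
  assumes "regular_rate r i"
  shows "0 \<le> r (1 - int n) i" "summable (\<lambda>n. r (1 - int n) i)"
    "summable (\<lambda>n. real n * r (1 - int n) i)"
  using assms by (simp_all add: regular_rate_def)

lemma genf_factor_at_one:
  assumes "regular_rate r i"
  obtains q where "continuous_on {0..1} q"
    and "\<And>y. y \<in> {0..1} \<Longrightarrow> genf r i y = genf r i 1 - (1 - y) * q y"
    and "q 1 = genf_deriv1 r i"
proof
  let ?p = "\<lambda>n. r (1 - int n) i"
  note regular = regular_rateD[OF assms]
  show "continuous_on {0..1} (slope_series ?p)"
    using regular by (intro continuous_on_slope_series)
  show "genf r i y = genf r i 1 - (1 - y) * slope_series ?p y" if "y \<in> {0..1}" for y
    using powser_eq_sum_minus_slope_series[of ?p y] regular that unfolding genf_def by simp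
  show "slope_series ?p 1 = genf_deriv1 r i"
    unfolding slope_series_def genf_deriv1_def by (simp add: mult.commute)
qed

lemma genf_nonneg:
  assumes "regular_rate r i" "0 \<le> y" "y \<le> 1"
  shows "0 \<le> genf r i y"
proof -
  note regular = regular_rateD[OF assms(1)]
  have "summable (\<lambda>n. r (1 - int n) i * y ^ n)"
    using regular(1,2) assms(2,3) by (rule summable_powser_nonneg_unit_interval)
  then show ?thesis
    unfolding genf_def using regular(1) assms(2) by (intro suminf_nonneg mult_nonneg_nonneg) auto
qed

lemma genf_at_zero: "genf r i 0 = r 1 i"
  unfolding genf_def using powser_zero[of "\<lambda>n. r (1 - int n) i"] by simp

lemma sqrt_eq_add_mult_div:
  fixes u s h N :: real
  assumes "0 \<le> u" "0 < s" "u = s\<^sup>2 + h * N"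
  shows "sqrt u = s + h * (N / (sqrt u + s))"
proof -
  have "(sqrt u - s) * (sqrt u + s) = h * N"
    using assms by (simp add: algebra_simps power2_eq_square)
  moreover have "0 < sqrt u + s" using assms by (simp add: add_nonneg_pos)
  ultimately show ?thesis by (simp add: field_simps)
qed

lemma server_term_factor:
  fixes A B C D qa qb qc qd :: "real \<Rightarrow> real" and \<alpha> \<beta> \<gamma> \<delta> x :: real
  assumes pos: "0 < \<alpha>" "0 < \<delta>"
    and cont: "continuous_on {0..1} qa" "continuous_on {0..1} qb"
      "continuous_on {0..1} qc" "continuous_on {0..1} qd"
    and A: "\<And>y. y \<in> {0..1} \<Longrightarrow> A y = \<alpha> - (1 - y) * qa y"
    and B: "\<And>y. y \<in> {0..1} \<Longrightarrow> B y = \<beta> - (1 - y) * qb y"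
    and C: "\<And>y. y \<in> {0..1} \<Longrightarrow> C y = \<gamma> - (1 - y) * qc y"
    and D: "\<And>y. y \<in> {0..1} \<Longrightarrow> D y = \<delta> - (1 - y) * qd y"
    and AD_nonneg: "\<And>y. y \<in> {0..1} \<Longrightarrow> 0 \<le> A y \<and> 0 \<le> D y"
  obtains g where "continuous_on {0..1} g"
    and "\<And>y. y \<in> {0..1} \<Longrightarrow>
      x * sqrt ((y * (\<alpha> + \<beta> - \<gamma> - \<delta>) - B y + C y)\<^sup>2 + 4 * A y * D y) + B y + C y
        - y * (\<alpha> + \<beta> + \<gamma> + \<delta>) = (x - 1) * (\<alpha> + \<delta>) + (1 - y) * g y"
    and "x = 1 \<Longrightarrow> g 1 = -2 * ((1 / (\<alpha> + \<delta>)) *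
      (\<delta> * (qa 1 - \<alpha> + qb 1 - \<beta>) + \<alpha> * (qc 1 - \<gamma> + qd 1 - \<delta>)))"
proof
  define m where "m y = qb y - qc y - (\<alpha> + \<beta> - \<gamma> - \<delta>)" for y
  define F where "F y = (\<alpha> - \<delta>) + (1 - y) * m y" for y
  define u where "u y = (F y)\<^sup>2 + 4 * (\<alpha> - (1 - y) * qa y) * (\<delta> - (1 - y) * qd y)" for y
  define N where "N y = m y * (F y + (\<alpha> - \<delta>)) - 4 * (\<alpha> * qd y + \<delta> * qa y)
    + 4 * (1 - y) * qa y * qd y" for y
  define \<psi> where "\<psi> y = N y / (sqrt (u y) + (\<alpha> + \<delta>))" for y
  define g where "g y = x * \<psi> y - qb y - qc y + (\<alpha> + \<beta> + \<gamma> + \<delta>)" for y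
  have u_nonneg: "0 \<le> u y" if "y \<in> {0..1}" for y
    using AD_nonneg[OF that] unfolding u_def A[OF that, symmetric] D[OF that, symmetric] by simp
  have u_expand: "u y = (\<alpha> + \<delta>)\<^sup>2 + (1 - y) * N y" for y
    unfolding u_def N_def F_def by (simp add: algebra_simps power2_eq_square)
  show "continuous_on {0..1} g"
  proof -
    have "continuous_on {0..1} u" "continuous_on {0..1} N"
      unfolding u_def N_def F_def m_def using cont by (auto intro!: continuous_intros)
    moreover have "sqrt (u y) + (\<alpha> + \<delta>) \<noteq> 0" if "y \<in> {0..1}" for y
      using real_sqrt_ge_zero[OF u_nonneg[OF that]] pos by linarith
    ultimately have "continuous_on {0..1} \<psi>"
      unfolding \<psi>_def by (intro continuous_intros) auto
    then show ?thesis
      unfolding g_def using cont by (intro continuous_intros)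
  qed
  show "x * sqrt ((y * (\<alpha> + \<beta> - \<gamma> - \<delta>) - B y + C y)\<^sup>2 + 4 * A y * D y) + B y + C y
        - y * (\<alpha> + \<beta> + \<gamma> + \<delta>) = (x - 1) * (\<alpha> + \<delta>) + (1 - y) * g y" if y: "y \<in> {0..1}" for y
  proof -
    have radicand: "(y * (\<alpha> + \<beta> - \<gamma> - \<delta>) - B y + C y)\<^sup>2 + 4 * A y * D y = u y"
      unfolding u_def F_def m_def A[OF y] B[OF y] C[OF y] D[OF y] by (simp add: algebra_simps)
    have root: "sqrt (u y) = (\<alpha> + \<delta>) + (1 - y) * \<psi> y"
      unfolding \<psi>_def using u_nonneg[OF y] pos by (intro sqrt_eq_add_mult_div u_expand) auto
    show ?thesis
      unfolding radicand root unfolding g_def B[OF y] C[OF y] by (simp add: algebra_simps)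
  qed
  show "g 1 = -2 * ((1 / (\<alpha> + \<delta>)) *
      (\<delta> * (qa 1 - \<alpha> + qb 1 - \<beta>) + \<alpha> * (qc 1 - \<gamma> + qd 1 - \<delta>)))" if "x = 1"
  proof -
    have "sqrt (u 1) = \<alpha> + \<delta>" using pos by (simp add: u_expand)
    then show ?thesis
      using that pos unfolding g_def \<psi>_def N_def F_def m_def by (simp add: field_simps)
  qed
qed

lemma root_in_open_unit_interval:
  fixes f G :: "real \<Rightarrow> real" and T :: real
  assumes G_cont: "continuous_on {0..1} G"
    and f_eq: "\<And>y. y \<in> {0..1} \<Longrightarrow> f y = T + (1 - y) * G y"
    and "0 < f 0" "T \<le> 0" "T = 0 \<Longrightarrow> G 1 < 0"
  shows "\<exists>\<beta>. 0 < \<beta> \<and> \<beta> < 1 \<and> f \<beta> = 0"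
proof -
  obtain b where b: "0 < b" "b \<le> 1" "f b < 0"
  proof (cases "T < 0")
    case True
    then show thesis using that[of 1] f_eq[of 1] by simp
  next
    case False
    with assms have "G 1 < 0" by simp
    then have "eventually (\<lambda>y. G y < 0) (at_left 1)"
      using order_tendstoD(2)[OF continuous_on_Icc_at_leftD[OF G_cont]] by simp
    moreover have "eventually (\<lambda>y. y \<in> {0<..<1}) (at_left (1::real))"
      by (rule eventually_at_left_real) simp
    ultimately obtain y where "G y < 0" "y \<in> {0<..<1}"
      using eventually_happens'[OF trivial_limit_at_left_real] eventually_conj by blast
    then show thesis using that[of y] f_eq[of y] False \<open>T \<le> 0\<close> by (simp add: mult_pos_neg)
  qed
  have "continuous_on {0..1} (\<lambda>y. T + (1 - y) * G y)"
    using G_cont by (intro continuous_intros)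
  then have "continuous_on {0..1} f" by (rule continuous_on_eq) (simp add: f_eq)
  then have "continuous_on {0..b} f" by (rule continuous_on_subset) (use b in auto)
  then obtain z where "0 \<le> z" "z \<le> b" "f z = 0"
    using IVT2'[of f b 0 0] b \<open>0 < f 0\<close> by auto
  moreover from \<open>0 < f 0\<close> \<open>f z = 0\<close> have "z \<noteq> 0" by auto
  moreover from b \<open>f z = 0\<close> have "z \<noteq> b" by auto
  ultimately show ?thesis using b by (intro exI[of _ z]) auto
qed

definition server_term ::
  "(int \<Rightarrow> nat \<Rightarrow> real) \<Rightarrow> (int \<Rightarrow> nat \<Rightarrow> real) \<Rightarrow> (int \<Rightarrow> nat \<Rightarrow> real) \<Rightarrow> (int \<Rightarrow> nat \<Rightarrow> real)
    \<Rightarrow> nat \<Rightarrow> real \<Rightarrow> real \<Rightarrow> real" where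
  "server_term a b cc d i x y =
     x * sqrt ((y * (genf a i 1 + genf b i 1 - genf cc i 1 - genf d i 1) - genf b i y + genf cc i y)\<^sup>2
               + 4 * genf a i y * genf d i y)
     + genf b i y + genf cc i y - y * (genf a i 1 + genf b i 1 + genf cc i 1 + genf d i 1)"

definition server_drift ::
  "(int \<Rightarrow> nat \<Rightarrow> real) \<Rightarrow> (int \<Rightarrow> nat \<Rightarrow> real) \<Rightarrow> (int \<Rightarrow> nat \<Rightarrow> real) \<Rightarrow> (int \<Rightarrow> nat \<Rightarrow> real)
    \<Rightarrow> nat \<Rightarrow> real" where
  "server_drift a b cc d i = (1 / (genf a i 1 + genf d i 1)) *
     (genf d i 1 * (genf_deriv1 a i - genf a i 1 + genf_deriv1 b i - genf b i 1)
      + genf a i 1 * (genf_deriv1 cc i - genf cc i 1 + genf_deriv1 d i - genf d i 1))"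

lemma server_term_factor_at_one:
  assumes "regular_rate a i" "regular_rate b i" "regular_rate cc i" "regular_rate d i"
    and "0 < genf a i 1" "0 < genf d i 1"
  obtains g where "continuous_on {0..1} g"
    and "\<And>y. y \<in> {0..1} \<Longrightarrow>
      server_term a b cc d i x y = (x - 1) * (genf a i 1 + genf d i 1) + (1 - y) * g y"
    and "x = 1 \<Longrightarrow> g 1 = -2 * server_drift a b cc d i"
proof -
  obtain qa where qa: "continuous_on {0..1} qa"
    "\<And>y. y \<in> {0..1} \<Longrightarrow> genf a i y = genf a i 1 - (1 - y) * qa y" "qa 1 = genf_deriv1 a i"
    using genf_factor_at_one[OF assms(1)] by blast
  obtain qb where qb: "continuous_on {0..1} qb"
    "\<And>y. y \<in> {0..1} \<Longrightarrow> genf b i y = genf b i 1 - (1 - y) * qb y" "qb 1 = genf_deriv1 b i"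
    using genf_factor_at_one[OF assms(2)] by blast
  obtain qc where qc: "continuous_on {0..1} qc"
    "\<And>y. y \<in> {0..1} \<Longrightarrow> genf cc i y = genf cc i 1 - (1 - y) * qc y" "qc 1 = genf_deriv1 cc i"
    using genf_factor_at_one[OF assms(3)] by blast
  obtain qd where qd: "continuous_on {0..1} qd"
    "\<And>y. y \<in> {0..1} \<Longrightarrow> genf d i y = genf d i 1 - (1 - y) * qd y" "qd 1 = genf_deriv1 d i"
    using genf_factor_at_one[OF assms(4)] by blast
  have "\<And>y. y \<in> {0..1} \<Longrightarrow> 0 \<le> genf a i y \<and> 0 \<le> genf d i y"
    using assms(1,4) genf_nonneg by auto
  from server_term_factor[OF assms(5,6) qa(1) qb(1) qc(1) qd(1) qa(2) qb(2) qc(2) qd(2) this]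
  obtain g where "continuous_on {0..1} g"
    "\<And>y. y \<in> {0..1} \<Longrightarrow>
      server_term a b cc d i x y = (x - 1) * (genf a i 1 + genf d i 1) + (1 - y) * g y"
    "x = 1 \<Longrightarrow> g 1 = -2 * server_drift a b cc d i"
    unfolding server_term_def server_drift_def qa(3) qb(3) qc(3) qd(3) by blast
  then show thesis by (rule that)
qed

lemma server_terms_factor_at_one:
  assumes "\<And>i r. i \<in> I \<Longrightarrow> r \<in> {a, b, cc, d} \<Longrightarrow> regular_rate r i"
    and "\<And>i. i \<in> I \<Longrightarrow> 0 < genf a i 1 \<and> 0 < genf d i 1"
  obtains g where "\<And>i. i \<in> I \<Longrightarrow> continuous_on {0..1} (g i)"
    and "\<And>i y. i \<in> I \<Longrightarrow> y \<in> {0..1} \<Longrightarrow>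
      server_term a b cc d i (x i) y = (x i - 1) * (genf a i 1 + genf d i 1) + (1 - y) * g i y"
    and "\<And>i. i \<in> I \<Longrightarrow> x i = 1 \<Longrightarrow> g i 1 = -2 * server_drift a b cc d i"
proof -
  define P where "P i h \<longleftrightarrow> continuous_on {0..1} h \<and>
      (\<forall>y\<in>{0..1}. server_term a b cc d i (x i) y = (x i - 1) * (genf a i 1 + genf d i 1) + (1 - y) * h y) \<and>
      (x i = 1 \<longrightarrow> h 1 = -2 * server_drift a b cc d i)" for i h
  have "\<exists>h. P i h" if "i \<in> I" for i
    using server_term_factor_at_one[of a i b cc d "x i"] assms that unfolding P_def by (metis insertI1 insertI2)
  then obtain g where "P i (g i)" if "i \<in> I" for i by metis
  then show thesis unfolding P_def by (intro that[of g]) blast+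
qed

lemma server_term_pos_at_zero:
  assumes "a 1 i = 0 \<or> d 1 i = 0" "b 1 i = cc 1 i \<and> b 1 i \<noteq> 0" "0 \<le> b 1 i"
  shows "0 < server_term a b cc d i x 0"
  using assms by (auto simp: server_term_def genf_at_zero)

lemma sum_sign_defect:
  fixes x w :: "'a \<Rightarrow> real"
  assumes "finite I" "\<And>i. i \<in> I \<Longrightarrow> x i \<in> {-1, 1}" "\<And>i. i \<in> I \<Longrightarrow> 0 < w i"
  shows "(\<Sum>i\<in>I. (x i - 1) * w i) \<le> 0"
    and "(\<Sum>i\<in>I. (x i - 1) * w i) = 0 \<Longrightarrow> i \<in> I \<Longrightarrow> x i = 1"
proof -
  have defect: "0 \<le> (1 - x i) * w i" if "i \<in> I" for i
    using assms(2,3)[OF that] by auto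
  have sum_eq: "(\<Sum>i\<in>I. (x i - 1) * w i) = - (\<Sum>i\<in>I. (1 - x i) * w i)"
    by (simp add: sum_negf[symmetric] algebra_simps)
  show "(\<Sum>i\<in>I. (x i - 1) * w i) \<le> 0"
    unfolding sum_eq using defect by (simp add: sum_nonneg)
  assume "(\<Sum>i\<in>I. (x i - 1) * w i) = 0" "i \<in> I"
  then have "(1 - x i) * w i = 0"
    using sum_nonneg_eq_0_iff[OF assms(1) defect] by (simp add: sum_eq)
  with assms(3)[OF \<open>i \<in> I\<close>] show "x i = 1" by simp
qed

theorem lemma3:
  fixes c :: nat
    and a b cc d :: "int \<Rightarrow> nat \<Rightarrow> real"
    and x :: "nat \<Rightarrow> real"
  assumes c_pos: "c \<ge> 1"
    and nonneg: "\<And>i k. i \<in> {1..c} \<Longrightarrow> k \<le> 1 \<Longrightarrow>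
                   a k i \<ge> 0 \<and> b k i \<ge> 0 \<and> cc k i \<ge> 0 \<and> d k i \<ge> 0"
    and A_i: "\<And>i. i \<in> {1..c} \<Longrightarrow>
                summable (\<lambda>n. a (1 - int n) i) \<and> summable (\<lambda>n. b (1 - int n) i) \<and>
                summable (\<lambda>n. cc (1 - int n) i) \<and> summable (\<lambda>n. d (1 - int n) i)"
    and A_ii: "\<And>i. i \<in> {1..c} \<Longrightarrow> genf a i 1 > 0 \<and> genf d i 1 > 0"
    and A_iii: "\<And>i. i \<in> {1..c} \<Longrightarrow>
                summable (\<lambda>n. real n * a (1 - int n) i) \<and> summable (\<lambda>n. real n * b (1 - int n) i) \<and>
                summable (\<lambda>n. real n * cc (1 - int n) i) \<and> summable (\<lambda>n. real n * d (1 - int n) i)"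
    and A_iv: "\<And>i. i \<in> {1..c} \<Longrightarrow> a 1 i = 0 \<or> d 1 i = 0"
    and A_v: "\<And>i. i \<in> {1..c} \<Longrightarrow> b 1 i = cc 1 i \<and> b 1 i \<noteq> 0"
    and E: "0 < (\<Sum>i=1..c. (1 / (genf a i 1 + genf d i 1)) *
              (genf d i 1 * (genf_deriv1 a i - genf a i 1 + genf_deriv1 b i - genf b i 1)
               + genf a i 1 * (genf_deriv1 cc i - genf cc i 1 + genf_deriv1 d i - genf d i 1)))"
    and x_pm: "\<And>i. i \<in> {1..c} \<Longrightarrow> x i \<in> {-1, 1}"
  shows "\<exists>\<beta>0::real. 0 < \<beta>0 \<and> \<beta>0 < 1 \<and>
    0 = (\<Sum>i=1..c.
          x i * sqrt ((\<beta>0 * (genf a i 1 + genf b i 1 - genf cc i 1 - genf d i 1)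
                        - genf b i \<beta>0 + genf cc i \<beta>0)\<^sup>2
                      + 4 * genf a i \<beta>0 * genf d i \<beta>0)
          + genf b i \<beta>0 + genf cc i \<beta>0
          - \<beta>0 * (genf a i 1 + genf b i 1 + genf cc i 1 + genf d i 1))"
proof -
  let ?I = "{1..c}"
  have regular: "regular_rate r i" if "i \<in> ?I" "r \<in> {a, b, cc, d}" for i r
    using nonneg[OF that(1)] A_i[OF that(1)] A_iii[OF that(1)] that(2)
    by (auto simp: regular_rate_def)
  obtain g where g: "\<And>i. i \<in> ?I \<Longrightarrow> continuous_on {0..1} (g i)"
    "\<And>i y. i \<in> ?I \<Longrightarrow> y \<in> {0..1} \<Longrightarrow>
      server_term a b cc d i (x i) y = (x i - 1) * (genf a i 1 + genf d i 1) + (1 - y) * g i y"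
    "\<And>i. i \<in> ?I \<Longrightarrow> x i = 1 \<Longrightarrow> g i 1 = -2 * server_drift a b cc d i"
    using server_terms_factor_at_one[OF regular A_ii] by blast
  define T where "T = (\<Sum>i\<in>?I. (x i - 1) * (genf a i 1 + genf d i 1))"
  have w_pos: "\<And>i. i \<in> ?I \<Longrightarrow> 0 < genf a i 1 + genf d i 1" using A_ii by (simp add: add_pos_pos)
  have T_nonpos: "T \<le> 0"
    unfolding T_def using x_pm w_pos by (rule sum_sign_defect(1)[OF finite_atLeastAtMost])
  have all_one: "x i = 1" if "T = 0" "i \<in> ?I" for i
    using x_pm w_pos that[unfolded T_def] by (rule sum_sign_defect(2)[OF finite_atLeastAtMost])
  have "\<exists>\<beta>. 0 < \<beta> \<and> \<beta> < 1 \<and> (\<Sum>i\<in>?I. server_term a b cc d i (x i) \<beta>) = 0"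
  proof (rule root_in_open_unit_interval[where G = "\<lambda>y. \<Sum>i\<in>?I. g i y" and T = T])
    show "continuous_on {0..1} (\<lambda>y. \<Sum>i\<in>?I. g i y)" using g(1) by (rule continuous_on_sum)
    show "(\<Sum>i\<in>?I. server_term a b cc d i (x i) y) = T + (1 - y) * (\<Sum>i\<in>?I. g i y)"
      if "y \<in> {0..1}" for y
      using g(2)[OF _ that] by (simp add: T_def sum.distrib sum_distrib_left)
    show "0 < (\<Sum>i\<in>?I. server_term a b cc d i (x i) 0)"
    proof (rule sum_pos)
      fix i assume i: "i \<in> ?I"
      show "0 < server_term a b cc d i (x i) 0"
        using server_term_pos_at_zero[of a i d b cc, OF A_iv[OF i] A_v[OF i]] nonneg[OF i, of 1] by simp
    qed (use c_pos in auto)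
    show "T \<le> 0" by (fact T_nonpos)
    show "(\<Sum>i\<in>?I. g i 1) < 0" if "T = 0"
    proof -
      have "(\<Sum>i\<in>?I. g i 1) = -2 * (\<Sum>i\<in>?I. server_drift a b cc d i)"
        using g(3) all_one[OF that] by (simp add: sum_distrib_left)
      with E show ?thesis by (simp add: server_drift_def)
    qed
  qed
  then obtain \<beta> where "0 < \<beta>" "\<beta> < 1" "(\<Sum>i\<in>?I. server_term a b cc d i (x i) \<beta>) = 0"
    by blast
  then show ?thesis unfolding server_term_def by (intro exI[of _ \<beta>]) simp
qed

end
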